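(* For any $1\le\alpha\le\mathcal N$ and $g\in\mathbb C[x_1^{\pm1},\dots,x_\alpha^{\pm1}]^{S(\alpha)}$, \[\iota\big(\Phi(\widetilde E_\alpha(g))\big)=\theta^{\alpha(\mathcal N-\alpha)}\,\mathcal A_\alpha(P),\qquad P(x_1,\dots,x_\alpha)=g(\mathfrak q^{-1/2}x_1^{-1},\dots,\mathfrak q^{-1/2}x_\alpha^{-1}).\]
   Context: Let $\mathfrak q,\mathfrak t\in\mathbb C^\times$ with $q_1=\mathfrak q$, $q_2=1/\mathfrak t$, $q_3=\mathfrak t/\mathfrak q$ not roots of unity; fix square roots $\theta=\mathfrak t^{1/2}$, $\mathfrak q^{1/2}$, $q_2^{1/2}$. Fix $\mathcal N\ge1$. $\widetilde{\mathcal A}$ is the $\mathbb C$-algebra generated by $D_r^{\pm1},w_r^{\pm1}$ ($1\le r\le\mathcal N$), all commuting except $D_rw_s=q_1^{\delta_{rs}}w_sD_r$, localized at $w_r-q_1^mw_s$ ($r\ne s$). $\mathcal B$ is the $\mathbb C$-algebra generated by $x_i^{\pm1},\Gamma_i^{\pm1}$ ($1\le i\le\mathcal N$), all commuting except $\Gamma_ix_i=\mathfrak q x_i\Gamma_i$, localized at $x_i-\mathfrak q^mx_j$ ($i\ne j$); $\iota:\widetilde{\mathcal A}\to\mathcal B$ is the isomorphism $w_i^{\pm1}\mapsto x_i^{\mp1}\mathfrak q^{\mp1/2}$, $D_i^{\pm1}\mapsto\Gamma_i^{\mp1}$. Let $\zeta(z/w)=\frac{\prod_{i=1}^3(z-q_i^{-1}w)}{(z-w)^3}$,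 $\varphi(z/w)=\frac{(q_1^{1/2}z-q_1^{-1/2}w)(q_2^{1/2}z-q_2^{-1/2}w)}{(z-w)^2}$. $\mathbb S=\bigoplus_k\mathbb S_k$, $\mathbb S_k$ the space of $f/\prod_{r\ne s}(x_r-x_s)$ with $f$ a symmetric complex Laurent polynomial in $x_1,\dots,x_k$, with shuffle product $F\star G=\frac{1}{k!\ell!}\mathrm{Sym}(F(x_1..x_k)G(x_{k+1}..x_{k+\ell})\prod_{r\le k<r'}\zeta(x_r/x_{r'}))$. With $Y_r(z)=\frac{-1}{1-q_1^{-1}}\prod_{s\ne r}\frac{z-w_sq_2^{-1}}{z-w_s}$, the map $\Phi:\mathbb S\to\widetilde{\mathcal A}$ is defined on $E\in\mathbb S_k$ by $\Phi(E)=\sum_{m_1+\dots+m_{\mathcal N}=k}\{\prod_r\prod_{p\le m_r}Y_r(w_rq_1^{-(p-1)})\cdot E(\{w_rq_1^{-(p-1)}\}_r^{p\le m_r})\prod_r\prod_{p_1<p_2\le m_r}\zeta^{-1}(\frac{w_rq_1^{-(p_1-1)}}{w_rq_1^{-(p_2-1)}})\prod_{r_1\ne r_2}\prod_{p_1\le m_{r_1},p_2\le m_{r_2}}\varphi^{-1}(\frac{w_{r_1}q_1^{-(p_1-1)}}{w_{r_2}q_1^{-(p_2-1)}})\prod_rD_r^{-m_r}\}$ ($m_r\in\mathbb N$). $\widetilde E_\alpha(g)=q_3^{\frac{\alpha-\alpha^2}2}(q_1^{-1}-1)^\alpha\frac{\prod_{1\le r\ne s\le\alpha}(x_r-q_1^{-1}x_s)\,g(x_1,\dots,x_\alpha)}{\prod_{1\le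 r\ne s\le\alpha}(x_r-x_s)}\in\mathbb S_\alpha$. For a symmetric Laurent polynomial $P$ in $\alpha$ variables, the generalized Macdonald operator is $\mathcal A_\alpha(P)=\frac{1}{\alpha!(\mathcal N-\alpha)!}\mathrm{Sym}_{x_1,\dots,x_{\mathcal N}}\Big(P(x_1,\dots,x_\alpha)\prod_{1\le i\le\alpha<j\le\mathcal N}\frac{\theta x_i-\theta^{-1}x_j}{x_i-x_j}\Gamma_1\cdots\Gamma_\alpha\Big)\in\mathcal B$, where Sym permutes the indices $1,\dots,\mathcal N$ of the $x_i$ and $\Gamma_i$ simultaneously. *)

theory Defs
  imports "HOL-Combinatorics.Permutations" Complex_Main
begin

text \<open>Parameters: q = frak q, t = frak t, qh = q^(1/2), th = theta = t^(1/2),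
  q2h = q_2^(1/2).  Hence q_1 = q, q_2 = 1/t, q_3 = t/q, and q_1^(-1) = 1/q, q_2^(-1) = t,
  q_3^(-1) = q/t.  Indices of variables are 0-based: w_0..w_(N-1), x_0..x_(N-1).

  Elements of the (localized) difference-operator algebras are represented by their unique
  normal form sum_e c_e(vars) * Mon^e (coefficient to the left of the monomial in D resp. Gamma):
  an operator is the map  e \<mapsto> c_e,  e :: nat => int the exponent vector, c_e a
  function of the commuting variables.\<close>

type_synonym op_alg = "(nat \<Rightarrow> int) \<Rightarrow> (nat \<Rightarrow> complex) \<Rightarrow> complex"

definition zeta :: "complex \<Rightarrow> complex \<Rightarrow> complex \<Rightarrow> complex \<Rightarrow> complex" where
  "zeta q t z w = ((z - (1/q) * w) * (z - t * w) * (z - (q/t) * w)) / (z - w)^3"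

definition phi :: "complex \<Rightarrow> complex \<Rightarrow> complex \<Rightarrow> complex \<Rightarrow> complex" where
  "phi qh q2h z w = ((qh * z - w / qh) * (q2h * z - w / q2h)) / (z - w)^2"

definition Yfun :: "nat \<Rightarrow> complex \<Rightarrow> complex \<Rightarrow> (nat \<Rightarrow> complex) \<Rightarrow> nat \<Rightarrow> complex \<Rightarrow> complex" where
  "Yfun N q t w r z = (-1 / (1 - 1/q)) * (\<Prod>s\<in>{..<N} - {r}. (z - w s * t) / (z - w s))"

text \<open>pt q w r p = w_r q_1^{-(p-1)} with 0-based p.\<close>
definition pt :: "complex \<Rightarrow> (nat \<Rightarrow> complex) \<Rightarrow> nat \<Rightarrow> nat \<Rightarrow> complex" where
  "pt q w r p = w r * q powi (- int p)"

text \<open>The evaluation points {w_r q_1^{-(p-1)}}, listed in some order (E is symmetric).\<close>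
definition pts :: "nat \<Rightarrow> complex \<Rightarrow> (nat \<Rightarrow> nat) \<Rightarrow> (nat \<Rightarrow> complex) \<Rightarrow> complex list" where
  "pts N q m w = concat (map (\<lambda>r. map (\<lambda>p. pt q w r p) [0..<m r]) [0..<N])"

definition Phi_term :: "nat \<Rightarrow> complex \<Rightarrow> complex \<Rightarrow> complex \<Rightarrow> complex \<Rightarrow>
    (complex list \<Rightarrow> complex) \<Rightarrow> (nat \<Rightarrow> nat) \<Rightarrow> (nat \<Rightarrow> complex) \<Rightarrow> complex" where
  "Phi_term N q t qh q2h E m w =
     (\<Prod>r<N. \<Prod>p<m r. Yfun N q t w r (pt q w r p))
     * E (pts N q m w)
     * (\<Prod>r<N. \<Prod>p1<m r. \<Prod>p2\<in>{p1<..<m r}. 1 / zeta q t (pt q w r p1) (pt q w r p2))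
     * (\<Prod>r1<N. \<Prod>r2\<in>{..<N} - {r1}. \<Prod>p1<m r1. \<Prod>p2<m r2.
          1 / phi qh q2h (pt q w r1 p1) (pt q w r2 p2))"

text \<open>Phi(E) for E in S_k: coefficient of D^d (d = -m) as a function of w.\<close>
definition Phi :: "nat \<Rightarrow> complex \<Rightarrow> complex \<Rightarrow> complex \<Rightarrow> complex \<Rightarrow> nat \<Rightarrow>
    (complex list \<Rightarrow> complex) \<Rightarrow> op_alg" where
  "Phi N q t qh q2h k E = (\<lambda>d w.
     if (\<forall>r. (r < N \<longrightarrow> d r \<le> 0) \<and> (N \<le> r \<longrightarrow> d r = 0)) \<and> (\<Sum>r<N. nat (- d r)) = k
     then Phi_term N q t qh q2h E (\<lambda>r. nat (- d r)) w else 0)"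

definition Etilde :: "complex \<Rightarrow> complex \<Rightarrow> nat \<Rightarrow> (complex list \<Rightarrow> complex) \<Rightarrow> complex list \<Rightarrow> complex" where
  "Etilde q t \<alpha> g xs =
     (t/q) powi ((int \<alpha> - int \<alpha>^2) div 2) * (1/q - 1)^\<alpha>
     * (\<Prod>r<\<alpha>. \<Prod>s\<in>{..<\<alpha>} - {r}. (xs!r - (1/q) * xs!s)) * g xs
     / (\<Prod>r<\<alpha>. \<Prod>s\<in>{..<\<alpha>} - {r}. (xs!r - xs!s))"

text \<open>iota: w_i \<mapsto> x_i^{-1} q^{-1/2}, D_i^{\<plusminus>1} \<mapsto> Gamma_i^{\<mp>1};
  on normal forms: c(w) D^d \<mapsto> c(q^{-1/2}/x) Gamma^{-d}.\<close>
definition iota :: "complex \<Rightarrow> op_alg \<Rightarrow> op_alg" where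
  "iota qh A = (\<lambda>e x. A (\<lambda>i. - e i) (\<lambda>i. 1 / (qh * x i)))"

definition Mac_op :: "nat \<Rightarrow> complex \<Rightarrow> nat \<Rightarrow> (complex list \<Rightarrow> complex) \<Rightarrow> op_alg" where
  "Mac_op N th \<alpha> P = (\<lambda>e x. (1 / (fact \<alpha> * fact (N - \<alpha>))) *
     (\<Sum>\<sigma>\<in>{\<sigma>. \<sigma> permutes {..<N}}.
        if e = (\<lambda>i. if i \<in> \<sigma> ` {..<\<alpha>} then 1 else 0)
        then P (map (\<lambda>i. x (\<sigma> i)) [0..<\<alpha>])
             * (\<Prod>i<\<alpha>. \<Prod>j\<in>{\<alpha>..<N}. (th * x (\<sigma> i) - x (\<sigma> j) / th) / (x (\<sigma> i) - x (\<sigma> j)))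
        else 0))"

text \<open>Generic points of (C^x)^N: all localized denominators are nonzero there; the set is dense,
  so equality of rational coefficients there is equality in the algebra.\<close>
definition generic_pt :: "nat \<Rightarrow> complex \<Rightarrow> complex \<Rightarrow> (nat \<Rightarrow> complex) \<Rightarrow> bool" where
  "generic_pt N q t x \<longleftrightarrow> (\<forall>i<N. x i \<noteq> 0) \<and>
     (\<forall>i<N. \<forall>j<N. i \<noteq> j \<longrightarrow> (\<forall>a b :: int. x i \<noteq> q powi a * t powi b * x j))"

definition op_eq :: "nat \<Rightarrow> complex \<Rightarrow> complex \<Rightarrow> op_alg \<Rightarrow> op_alg \<Rightarrow> bool" where
  "op_eq N q t A B \<longleftrightarrow> (\<forall>e x. generic_pt N q t x \<longrightarrow> A e x = B e x)"

definition sym_laurent :: "nat \<Rightarrow> (complex list \<Rightarrow> complex) \<Rightarrow> bool" where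
  "sym_laurent \<alpha> g \<longleftrightarrow>
     (\<exists>S c. finite S \<and> (\<forall>xs. length xs = \<alpha> \<longrightarrow>
        g xs = (\<Sum>a\<in>S. c a * (\<Prod>i<\<alpha>. (xs!i) powi (a i))))) \<and>
     (\<forall>xs \<sigma>. length xs = \<alpha> \<longrightarrow> \<sigma> permutes {..<\<alpha>} \<longrightarrow>
        g (map (\<lambda>i. xs ! \<sigma> i) [0..<\<alpha>]) = g xs)"

end

(*
  Compare the coefficients of Gamma^e on both sides at a generic point.  Under Phi the exponent
  D^(-m) is evaluated at the strings w_r, w_r q^-1, ..., w_r q^(1-m_r); if some m_r >= 2, two
  consecutive points of a string kill the factor prod (x_r - q^-1 x_s) of Etilde, so only
  indicator vectors m = 1_S with |S| = alpha survive, and these are exactly the exponents of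
  A_alpha(P).  For such S, the factors Y, (x_r - q^-1 x_s)/(x_r - x_s) and 1/phi attached to an
  ordered pair inside S multiply to (q_1 q_2)^(-1/2), and these constants exactly cancel the
  normalisation of Etilde; under iota each cross factor Y between S and its complement becomes
  theta (theta x_a - theta^-1 x_b)/(x_a - x_b).  On the Macdonald side the alpha! (N - alpha)!
  permutations sending {1..alpha} to S all contribute the same term, because P is symmetric.
*)

theory Submission
  imports Defs "HOL-Library.Indicator_Function"
begin

section \<open>Symmetric functions of lists\<close>

definition symmetric_list_fun :: "nat \<Rightarrow> ('a list \<Rightarrow> 'b) \<Rightarrow> bool" where
  "symmetric_list_fun n g \<longleftrightarrow>
     (\<forall>xs \<sigma>. length xs = n \<longrightarrow> \<sigma> permutes {..<n} \<longrightarrow> g (map (\<lambda>i. xs ! \<sigma> i) [0..<n]) = g xs)"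

lemma sym_laurent_imp_symmetric_list_fun: "sym_laurent \<alpha> g \<Longrightarrow> symmetric_list_fun \<alpha> g"
  by (simp add: sym_laurent_def symmetric_list_fun_def)

lemma symmetric_list_fun_map:
  fixes f :: "'a \<Rightarrow> 'b" and g :: "'b list \<Rightarrow> 'c"
  assumes "symmetric_list_fun n g"
  shows "symmetric_list_fun n (\<lambda>xs. g (map f xs))"
  unfolding symmetric_list_fun_def
proof (intro allI impI)
  fix xs :: "'a list" and \<sigma> assume xs: "length xs = n" and \<sigma>: "\<sigma> permutes {..<n}"
  have "map f (map (\<lambda>i. xs ! \<sigma> i) [0..<n]) = map (\<lambda>i. map f xs ! \<sigma> i) [0..<n]"
    using xs permutes_in_image[OF \<sigma>] by auto
  then show "g (map f (map (\<lambda>i. xs ! \<sigma> i) [0..<n])) = g (map f xs)"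
    using assms xs \<sigma> unfolding symmetric_list_fun_def by (metis length_map)
qed

lemma symmetric_list_fun_mset_eq:
  assumes "symmetric_list_fun n g" "mset xs = mset ys" "length ys = n"
  shows "g xs = g ys"
proof -
  obtain p where p: "p permutes {..<length ys}" "permute_list p ys = xs"
    using mset_eq_permutation[OF assms(2)] .
  have "g (permute_list p ys) = g ys"
    using assms(1,3) p(1) unfolding symmetric_list_fun_def permute_list_def by simp
  then show ?thesis using p(2) by simp
qed

section \<open>Permutations with a prescribed image\<close>

lemma card_permutes_setwise_stabilizer:
  assumes "finite A" "finite B" "A \<inter> B = {}"
  shows "card {\<tau>. \<tau> permutes (A \<union> B) \<and> \<tau> ` A = A} = fact (card A) * fact (card B)"
proof -
  let ?f = "\<lambda>(p1::'a \<Rightarrow> 'a, p2). p1 \<circ> p2"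
  have eq: "{\<tau>. \<tau> permutes (A \<union> B) \<and> \<tau> ` A = A} = ?f ` ({p. p permutes A} \<times> {p. p permutes B})"
  proof (intro equalityI subsetI)
    fix \<tau> assume "\<tau> \<in> {\<tau>. \<tau> permutes (A \<union> B) \<and> \<tau> ` A = A}"
    then have \<tau>: "\<tau> permutes (A \<union> B)" "\<tau> ` A = A" by auto
    have inj: "inj \<tau>" using \<tau>(1) permutes_inj by blast
    have B: "B = (A \<union> B) - A" using assms(3) by blast
    then have "\<tau> ` B = \<tau> ` (A \<union> B) - \<tau> ` A" by (metis image_set_diff[OF inj])
    with B have "\<tau> ` B = B" using permutes_image[OF \<tau>(1)] \<tau>(2) by simp
    then have "restrict_id \<tau> A permutes A" "restrict_id \<tau> B permutes B"
      using \<tau>(2) inj by (auto intro!: bij_imp_permutes simp: bij_betw_def inj_on_def restrict_id_def)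
    moreover have "\<tau> = restrict_id \<tau> A \<circ> restrict_id \<tau> B"
      using \<open>\<tau> ` B = B\<close> \<tau>(1) assms(3) by (fastforce simp: restrict_id_def fun_eq_iff permutes_not_in)
    ultimately show "\<tau> \<in> ?f ` ({p. p permutes A} \<times> {p. p permutes B})"
      by (auto intro!: image_eqI[where x="(restrict_id \<tau> A, restrict_id \<tau> B)"])
  next
    fix \<tau> assume "\<tau> \<in> ?f ` ({p. p permutes A} \<times> {p. p permutes B})"
    then obtain p1 p2 where p: "p1 permutes A" "p2 permutes B" "\<tau> = p1 \<circ> p2" by auto
    have "\<forall>y\<in>A. p2 y = y" using p(2) assms(3) by (meson disjoint_iff permutes_not_in)
    then have "p2 ` A = A" by simp
    then have "\<tau> ` A = A" using p permutes_image by (metis image_comp)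
    moreover have "\<tau> permutes (A \<union> B)"
      using p permutes_compose permutes_subset by (metis sup_ge1 sup_ge2)
    ultimately show "\<tau> \<in> {\<tau>. \<tau> permutes (A \<union> B) \<and> \<tau> ` A = A}" by auto
  qed
  have "inj_on ?f ({p. p permutes A} \<times> {p. p permutes B})"
  proof (rule inj_onI, clarsimp)
    fix p1 p2 p1' p2'
    assume p: "p1 permutes A" "p2 permutes B" "p1' permutes A" "p2' permutes B"
      and eq: "p1 \<circ> p2 = p1' \<circ> p2'"
    have app: "p1 (p2 y) = p1' (p2' y)" for y using eq by (metis comp_apply)
    have "p1 y = p1' y" for y
    proof (cases "y \<in> A")
      case True
      then have "y \<notin> B" using assms(3) by blast
      then show ?thesis using app[of y] p(2,4) by (simp add: permutes_not_in)
    qed (use p(1,3) in \<open>simp add: permutes_not_in\<close>)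
    moreover have "p2 y = p2' y" for y
    proof (cases "y \<in> B")
      case True
      then have "p2 y \<notin> A" "p2' y \<notin> A"
        using p(2,4) assms(3) by (auto dest: permutes_in_image)
      then show ?thesis using app[of y] p(1,3) by (simp add: permutes_not_in)
    qed (use p(2,4) in \<open>simp add: permutes_not_in\<close>)
    ultimately show "p1 = p1' \<and> p2 = p2'" by auto
  qed
  then show ?thesis
    using card_permutations[OF refl assms(1)] card_permutations[OF refl assms(2)]
    by (simp add: eq card_image card_cartesian_product)
qed

lemma permutes_with_image_exists:
  assumes "finite U" "A \<subseteq> U" "S \<subseteq> U" "card S = card A"
  obtains f where "f permutes U" "f ` A = S"
proof -
  have fin: "finite A" "finite S" using assms finite_subset by auto
  obtain b1 where b1: "bij_betw b1 A S"
    using finite_same_card_bij[OF fin] assms(4) by metis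
  have "card (U - S) = card (U - A)"
    using assms fin by (simp add: card_Diff_subset)
  then obtain b2 where b2: "bij_betw b2 (U - A) (U - S)"
    using finite_same_card_bij[of "U - A" "U - S"] assms(1) by auto
  define f where "f x = (if x \<in> A then b1 x else if x \<in> U then b2 x else x)" for x
  have "bij_betw (\<lambda>x. if x \<in> A then b1 x else b2 x) (A \<union> (U - A)) (S \<union> (U - S))"
    by (rule bij_betw_disjoint_Un[OF b1 b2]) auto
  then have "bij_betw f (A \<union> (U - A)) (S \<union> (U - S))"
    by (rule bij_betw_cong[THEN iffD1, rotated]) (auto simp: f_def)
  moreover have "A \<union> (U - A) = U" "S \<union> (U - S) = U" using assms(2,3) by auto
  ultimately have "bij_betw f U U" by simp
  then have "f permutes U" by (rule bij_imp_permutes) (use assms(2) in \<open>auto simp: f_def\<close>)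
  moreover have "f ` A = S" using b1 by (simp add: f_def bij_betw_def)
  ultimately show thesis by (rule that)
qed

lemma card_permutes_with_image:
  assumes "finite U" "A \<subseteq> U" "S \<subseteq> U" "card S = card A"
  shows "card {\<sigma>. \<sigma> permutes U \<and> \<sigma> ` A = S} = fact (card A) * fact (card U - card A)"
proof -
  obtain f where f: "f permutes U" "f ` A = S"
    using permutes_with_image_exists[OF assms] .
  have inj: "inj f" using f(1) permutes_inj by blast
  have U: "A \<union> (U - A) = U" using assms(2) by blast
  have "{\<sigma>. \<sigma> permutes U \<and> \<sigma> ` A = S} = (\<lambda>\<tau>. f \<circ> \<tau>) ` {\<tau>. \<tau> permutes (A \<union> (U - A)) \<and> \<tau> ` A = A}"
  proof (intro equalityI subsetI)
    fix \<sigma> assume "\<sigma> \<in> {\<sigma>. \<sigma> permutes U \<and> \<sigma> ` A = S}"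
    then have \<sigma>: "\<sigma> permutes U" "\<sigma> ` A = S" by auto
    have "inv f \<circ> \<sigma> permutes U" using \<sigma>(1) permutes_inv[OF f(1)] permutes_compose by blast
    moreover have "(inv f \<circ> \<sigma>) ` A = A"
      by (metis image_comp \<sigma>(2) f(2) image_inv_f_f[OF inj])
    moreover have "\<sigma> = f \<circ> (inv f \<circ> \<sigma>)"
      using permutes_inverses(1)[OF f(1)] by (auto simp: fun_eq_iff)
    ultimately show "\<sigma> \<in> (\<lambda>\<tau>. f \<circ> \<tau>) ` {\<tau>. \<tau> permutes (A \<union> (U - A)) \<and> \<tau> ` A = A}"
      unfolding U by blast
  next
    fix \<sigma> assume "\<sigma> \<in> (\<lambda>\<tau>. f \<circ> \<tau>) ` {\<tau>. \<tau> permutes (A \<union> (U - A)) \<and> \<tau> ` A = A}"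
    then obtain \<tau> where \<tau>: "\<tau> permutes U" "\<tau> ` A = A" "\<sigma> = f \<circ> \<tau>" unfolding U by auto
    then have "\<sigma> ` A = S" using f(2) by (metis image_comp)
    then show "\<sigma> \<in> {\<sigma>. \<sigma> permutes U \<and> \<sigma> ` A = S}"
      using \<tau> f permutes_compose by blast
  qed
  moreover have "inj_on (\<lambda>\<tau>. f \<circ> \<tau>) X" for X :: "('a \<Rightarrow> 'a) set"
    by (rule inj_onI) (metis inj fun.inj_map inj_eq)
  moreover have "card (U - A) = card U - card A"
    using card_Diff_subset[OF finite_subset[OF assms(2,1)] assms(2)] .
  ultimately show ?thesis
    using card_permutes_setwise_stabilizer[of A "U - A"] finite_subset[OF assms(2,1)] assms(1)
    by (simp add: card_image)
qed

lemma prod_prod_permutes_initial_segment: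
  fixes N \<alpha> :: nat
  assumes "\<sigma> permutes {..<N}" "\<sigma> ` {..<\<alpha>} = S"
  shows "(\<Prod>i<\<alpha>. \<Prod>j\<in>{\<alpha>..<N}. F (\<sigma> i) (\<sigma> j)) = (\<Prod>a\<in>S. \<Prod>b\<in>{..<N} - S. F a b)"
proof -
  have inj: "inj \<sigma>" using assms(1) permutes_inj by blast
  have "{\<alpha>..<N} = {..<N} - {..<\<alpha>}" by auto
  then have "\<sigma> ` {\<alpha>..<N} = \<sigma> ` ({..<N} - {..<\<alpha>})" by simp
  also have "\<dots> = {..<N} - S"
    using image_set_diff[OF inj] permutes_image[OF assms(1)] assms(2) by metis
  finally have "bij_betw \<sigma> {\<alpha>..<N} ({..<N} - S)" "bij_betw \<sigma> {..<\<alpha>} S"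
    using inj_on_imp_bij_betw[OF inj_on_subset[OF inj subset_UNIV]] assms(2) by metis+
  then show ?thesis
    by (simp add: prod.reindex_bij_betw[of \<sigma> "{\<alpha>..<N}" "{..<N} - S"]
                  prod.reindex_bij_betw[of \<sigma> "{..<\<alpha>}" S "\<lambda>a. \<Prod>b\<in>{..<N} - S. F a b"])
qed

section \<open>Coefficients of the generalized Macdonald operator\<close>

lemma Mac_op_altdef:
  "Mac_op N th \<alpha> P e x =
    (\<Sum>\<sigma> | \<sigma> permutes {..<N}. if e = indicator (\<sigma> ` {..<\<alpha>})
       then P (map (\<lambda>i. x (\<sigma> i)) [0..<\<alpha>]) *
         (\<Prod>i<\<alpha>. \<Prod>j\<in>{\<alpha>..<N}. (th * x (\<sigma> i) - x (\<sigma> j) / th) / (x (\<sigma> i) - x (\<sigma> j)))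
       else 0) / (fact \<alpha> * fact (N - \<alpha>))"
  unfolding Mac_op_def indicator_def[abs_def] of_bool_def by simp

lemma Mac_op_eq_0:
  assumes "\<alpha> \<le> N" "\<nexists>S. S \<subseteq> {..<N} \<and> card S = \<alpha> \<and> e = indicator S"
  shows "Mac_op N th \<alpha> P e x = 0"
proof -
  have "e \<noteq> indicator (\<sigma> ` {..<\<alpha>})" if "\<sigma> permutes {..<N}" for \<sigma>
  proof -
    have "\<sigma> ` {..<\<alpha>} \<subseteq> {..<N}" using permutes_image[OF that] assms(1) by auto
    moreover have "card (\<sigma> ` {..<\<alpha>}) = \<alpha>"
      using card_image[OF inj_on_subset[OF permutes_inj[OF that] subset_UNIV]] by simp
    ultimately show ?thesis using assms(2) by blast
  qed
  then show ?thesis by (simp add: Mac_op_altdef)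
qed

lemma Mac_op_indicator:
  assumes "\<alpha> \<le> N" "S \<subseteq> {..<N}" "card S = \<alpha>" "distinct ls" "set ls = S"
    and "symmetric_list_fun \<alpha> P"
  shows "Mac_op N th \<alpha> P (indicator S) x =
    P (map x ls) * (\<Prod>a\<in>S. \<Prod>b\<in>{..<N} - S. (th * x a - x b / th) / (x a - x b))"
    (is "_ = ?C")
proof -
  define T where "T \<sigma> = P (map (\<lambda>i. x (\<sigma> i)) [0..<\<alpha>]) *
    (\<Prod>i<\<alpha>. \<Prod>j\<in>{\<alpha>..<N}. (th * x (\<sigma> i) - x (\<sigma> j) / th) / (x (\<sigma> i) - x (\<sigma> j)))" for \<sigma>
  have T: "T \<sigma> = ?C" if \<sigma>: "\<sigma> permutes {..<N}" "\<sigma> ` {..<\<alpha>} = S" for \<sigma>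
  proof -
    have "distinct (map \<sigma> [0..<\<alpha>])"
      using inj_on_subset[OF permutes_inj[OF \<sigma>(1)] subset_UNIV] by (simp add: distinct_map)
    moreover have "set (map \<sigma> [0..<\<alpha>]) = set ls" using \<sigma>(2) assms(5) by (simp add: atLeast0LessThan)
    ultimately have "mset (map x (map \<sigma> [0..<\<alpha>])) = mset (map x ls)"
      using assms(4) set_eq_iff_mset_eq_distinct by (metis mset_map)
    moreover have "length (map x ls) = \<alpha>" using assms(3-5) distinct_card by fastforce
    ultimately have "P (map x (map \<sigma> [0..<\<alpha>])) = P (map x ls)"
      by (rule symmetric_list_fun_mset_eq[OF assms(6)])
    then show ?thesis
      unfolding T_def
      using prod_prod_permutes_initial_segment[OF \<sigma>, of "\<lambda>a b. (th * x a - x b / th) / (x a - x b)"]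
      by (simp add: comp_def)
  qed
  have "indicator S = (indicator X :: nat \<Rightarrow> int) \<longleftrightarrow> X = S" for X
    by (auto simp: fun_eq_iff indicator_def split: if_splits)
  then have "Mac_op N th \<alpha> P (indicator S) x =
    (\<Sum>\<sigma> | \<sigma> permutes {..<N} \<and> \<sigma> ` {..<\<alpha>} = S. T \<sigma>) / (fact \<alpha> * fact (N - \<alpha>))"
    by (simp add: Mac_op_altdef T_def sum.inter_filter[symmetric] finite_permutations)
  also have "\<dots> = ?C"
    using card_permutes_with_image[of "{..<N}" "{..<\<alpha>}" S] assms(1-3) by (simp add: T)
  finally show ?thesis .
qed

section \<open>Coefficients of the image of Etilde under Phi\<close>

lemma nat_indicator [simp]: "nat (indicator S x) = indicator S x"
  by (simp add: indicator_def)

lemma nonneg_exponent_cases: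
  fixes e :: "nat \<Rightarrow> int"
  assumes "\<forall>r. (r < N \<longrightarrow> 0 \<le> e r) \<and> (N \<le> r \<longrightarrow> e r = 0)" "(\<Sum>r<N. nat (e r)) = \<alpha>"
  obtains S where "S \<subseteq> {..<N}" "card S = \<alpha>" "e = indicator S"
    | r where "r < N" "2 \<le> e r"
proof (cases "\<forall>r<N. e r \<le> 1")
  case True
  define S where "S = {r. r < N \<and> e r = 1}"
  have S: "S \<subseteq> {..<N}" by (auto simp: S_def)
  have "e r = indicator S r" for r
  proof (cases "r < N")
    case True
    then show ?thesis using assms(1) \<open>\<forall>r<N. e r \<le> 1\<close> by (force simp: S_def indicator_def)
  qed (use assms(1) in \<open>simp add: S_def indicator_def\<close>)
  then have "e = indicator S" by blast
  moreover have "card S = \<alpha>"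
    using assms(2) sum_indicator_eq_card[of "{..<N}" S] S by (simp add: \<open>e = indicator S\<close> Int_absorb1)
  ultimately show thesis using that(1) S by blast
next
  case False
  then show thesis using that(2) by force
qed

lemma iota_Phi_apply:
  "iota qh (Phi N q t qh q2h k E) e x =
    (if (\<forall>r. (r < N \<longrightarrow> 0 \<le> e r) \<and> (N \<le> r \<longrightarrow> e r = 0)) \<and> (\<Sum>r<N. nat (e r)) = k
     then Phi_term N q t qh q2h E (\<lambda>r. nat (e r)) (\<lambda>i. 1 / (qh * x i)) else 0)"
  unfolding iota_def Phi_def by (simp only: minus_minus neg_le_0_iff_le neg_equal_0_iff_equal)

lemma length_pts: "length (pts N q m w) = (\<Sum>r<N. m r)"
  by (induct N) (auto simp: pts_def)

lemma pt_in_pts: "r < N \<Longrightarrow> p < m r \<Longrightarrow> pt q w r p \<in> set (pts N q m w)"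
  unfolding pts_def by (auto intro!: bexI[of _ r])

lemma pts_indicator: "pts N q (indicator S) w = map w (filter (\<lambda>r. r \<in> S) [0..<N])"
  by (induct N) (auto simp: pts_def pt_def indicator_def)

lemma Etilde_eq_0:
  assumes "i < \<alpha>" "j < \<alpha>" "i \<noteq> j" "xs ! i = xs ! j / q"
  shows "Etilde q t \<alpha> g xs = 0"
proof -
  have "(\<Prod>s\<in>{..<\<alpha>} - {i}. xs ! i - 1 / q * xs ! s) = 0"
    using assms by (auto intro!: bexI[of _ j])
  then have "(\<Prod>r<\<alpha>. \<Prod>s\<in>{..<\<alpha>} - {r}. xs ! r - 1 / q * xs ! s) = 0"
    using assms(1) by auto
  then show ?thesis by (simp add: Etilde_def)
qed

lemma Phi_term_Etilde_eq_0:
  assumes "r < N" "2 \<le> m r" "(\<Sum>r<N. m r) = \<alpha>" "w r \<noteq> 0" "q \<noteq> 1"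
  shows "Phi_term N q t qh q2h (Etilde q t \<alpha> g) m w = 0"
proof -
  let ?xs = "pts N q m w"
  have len: "length ?xs = \<alpha>" using assms(3) by (simp add: length_pts)
  have "pt q w r 1 = w r / q" "pt q w r 0 = w r"
    by (simp_all add: pt_def power_int_minus divide_inverse)
  moreover have "pt q w r 1 \<in> set ?xs" "pt q w r 0 \<in> set ?xs" using pt_in_pts assms(1,2) by auto
  ultimately obtain i j where ij: "i < \<alpha>" "?xs ! i = w r / q" "j < \<alpha>" "?xs ! j = w r"
    by (metis in_set_conv_nth len)
  have "w r / q \<noteq> w r" using assms(4,5) by (cases "q = 0") (auto simp: field_simps)
  then have "i \<noteq> j" using ij by auto
  then have "Etilde q t \<alpha> g ?xs = 0" using Etilde_eq_0 ij by metis
  then show ?thesis by (simp add: Phi_term_def)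
qed

lemma Phi_term_indicator:
  assumes "S \<subseteq> {..<N}"
  shows "Phi_term N q t qh q2h E (indicator S) w =
    (\<Prod>a\<in>S. Yfun N q t w a (w a)) * E (map w (filter (\<lambda>r. r \<in> S) [0..<N])) *
    (\<Prod>a\<in>S. \<Prod>b\<in>S - {a}. 1 / phi qh q2h (w a) (w b))"
proof -
  have prod_ind: "(\<Prod>p<indicator S r. f p) = (if r \<in> S then f 0 else 1)" for r and f :: "nat \<Rightarrow> complex"
    by (simp add: indicator_def)
  have restrict: "(\<Prod>r<N. if r \<in> S then f r else 1) = prod f S" for f :: "nat \<Rightarrow> complex"
    using assms by (simp add: prod.If_cases Int_absorb1)
  have Y: "(\<Prod>r<N. \<Prod>p<indicator S r. Yfun N q t w r (pt q w r p)) = (\<Prod>a\<in>S. Yfun N q t w a (w a))"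
    by (simp add: prod_ind pt_def restrict)
  have "{p1<..<indicator S r} = {}" for p1 r :: nat
    by (auto simp: indicator_def)
  then have zeta: "(\<Prod>r<N. \<Prod>p1<indicator S r. \<Prod>p2\<in>{p1<..<indicator S r}.
                     1 / zeta q t (pt q w r p1) (pt q w r p2)) = 1"
    by simp
  have "(\<Prod>r2\<in>{..<N} - {a}. \<Prod>p1<indicator S a. \<Prod>p2<indicator S r2.
            1 / phi qh q2h (pt q w a p1) (pt q w r2 p2)) =
        (if a \<in> S then \<Prod>b\<in>S - {a}. 1 / phi qh q2h (w a) (w b) else 1)" for a
  proof -
    have "({..<N} - {a}) \<inter> S = S - {a}" using assms by auto
    then show ?thesis by (simp add: prod_ind pt_def prod.If_cases)
  qed
  then have phi: "(\<Prod>r1<N. \<Prod>r2\<in>{..<N} - {r1}. \<Prod>p1<indicator S r1. \<Prod>p2<indicator S r2.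
                   1 / phi qh q2h (pt q w r1 p1) (pt q w r2 p2)) =
                 (\<Prod>a\<in>S. \<Prod>b\<in>S - {a}. 1 / phi qh q2h (w a) (w b))"
    by (simp only: restrict)
  show ?thesis
    unfolding Phi_term_def pts_indicator Y zeta phi by simp
qed

lemma prod_offdiagonal_distinct_list:
  assumes "distinct ls"
  shows "(\<Prod>r<length ls. \<Prod>s\<in>{..<length ls} - {r}. F (ls ! r) (ls ! s)) =
         (\<Prod>a\<in>set ls. \<Prod>b\<in>set ls - {a}. F a b)"
proof -
  have bij: "bij_betw ((!) ls) {..<length ls} (set ls)"
    using bij_betw_nth[OF assms] by auto
  have inner: "(\<Prod>s\<in>{..<length ls} - {r}. F (ls ! r) (ls ! s)) = (\<Prod>b\<in>set ls - {ls ! r}. F (ls ! r) b)"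
    if "r < length ls" for r
    using bij_betw_DiffI[OF bij, of "{r}" "{ls ! r}"] that
    by (intro prod.reindex_bij_betw) (auto simp: bij_betw_def)
  show ?thesis
    by (simp add: inner prod.reindex_bij_betw[OF bij, of "\<lambda>a. \<Prod>b\<in>set ls - {a}. F a b"])
qed

lemma Etilde_map_distinct:
  assumes "distinct ls" "length ls = \<alpha>"
  shows "Etilde q t \<alpha> g (map w ls) =
    (t/q) powi ((int \<alpha> - int \<alpha>^2) div 2) * (1/q - 1)^\<alpha> *
    (\<Prod>a\<in>set ls. \<Prod>b\<in>set ls - {a}. w a - 1/q * w b) * g (map w ls) /
    (\<Prod>a\<in>set ls. \<Prod>b\<in>set ls - {a}. w a - w b)"
proof -
  have offdiag: "(\<Prod>r<\<alpha>. \<Prod>s\<in>{..<\<alpha>} - {r}. F (map w ls ! r) (map w ls ! s)) =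
      (\<Prod>a\<in>set ls. \<Prod>b\<in>set ls - {a}. F (w a) (w b))" for F :: "complex \<Rightarrow> complex \<Rightarrow> complex"
  proof -
    have "(\<Prod>r<\<alpha>. \<Prod>s\<in>{..<\<alpha>} - {r}. F (map w ls ! r) (map w ls ! s)) =
        (\<Prod>r<length ls. \<Prod>s\<in>{..<length ls} - {r}. F (w (ls ! r)) (w (ls ! s)))"
      using assms(2) by (intro prod.cong) auto
    then show ?thesis
      using prod_offdiagonal_distinct_list[OF assms(1), of "\<lambda>a b. F (w a) (w b)"] by simp
  qed
  show ?thesis
    unfolding Etilde_def offdiag[of "\<lambda>u v. u - 1/q * v"] offdiag[of "\<lambda>u v. u - v"] ..
qed

lemma pair_factor_cancel:
  fixes qh q2h u v :: complex
  assumes "qh \<noteq> 0" "q2h \<noteq> 0" "u \<noteq> v" "qh^2 * u \<noteq> v" "q2h^2 * u \<noteq> v"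
  shows "(u - v / q2h^2) / (u - v) * ((u - v / qh^2) / (u - v)) * (1 / phi qh q2h u v) = 1 / (qh * q2h)"
proof -
  define a b d where "a = qh^2 * u - v" and "b = q2h^2 * u - v" and "d = u - v"
  have nonzero: "a \<noteq> 0" "b \<noteq> 0" "d \<noteq> 0" using assms(3-5) by (simp_all add: a_def b_def d_def)
  have factors: "qh * u - v / qh = a / qh" "q2h * u - v / q2h = b / q2h"
    "u - v / qh^2 = a / qh^2" "u - v / q2h^2 = b / q2h^2" "u - v = d"
    using assms(1,2) by (simp_all add: a_def b_def d_def field_simps power2_eq_square)
  show ?thesis
    unfolding phi_def factors using nonzero assms(1,2) by (simp add: field_simps power2_eq_square)
qed

lemma Etilde_prefactor_cancel:
  fixes q t qh q2h :: complex
  assumes "qh^2 = q" "q2h^2 = 1/t" "q \<noteq> 0" "q \<noteq> 1" "t \<noteq> 0"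
  shows "(-1 / (1 - 1/q))^\<alpha> * (1/q - 1)^\<alpha> * (t/q) powi ((int \<alpha> - int \<alpha>^2) div 2) *
           (1 / (qh * q2h))^(\<alpha> * (\<alpha> - 1)) = 1"
proof -
  define k where "k = \<alpha> * (\<alpha> - 1) div 2"
  have "even (\<alpha> * (\<alpha> - 1))" by (cases "even \<alpha>") auto
  then have k: "\<alpha> * (\<alpha> - 1) = 2 * k" unfolding k_def by simp
  have "int \<alpha> - int \<alpha>^2 = - int (\<alpha> * (\<alpha> - 1))"
    by (cases \<alpha>) (simp_all add: power2_eq_square algebra_simps)
  then have "(int \<alpha> - int \<alpha>^2) div 2 = - int k" by (simp only: k)
  then have "(t/q) powi ((int \<alpha> - int \<alpha>^2) div 2) = inverse ((t/q)^k)"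
    by (simp add: power_int_minus)
  moreover have "(1 / (qh * q2h))^2 = t/q"
    by (simp add: power_divide power_mult_distrib assms(1,2))
  then have "(1 / (qh * q2h))^(\<alpha> * (\<alpha> - 1)) = (t/q)^k"
    unfolding k power_mult by simp
  moreover have "-1 / (1 - 1/q) * (1/q - 1) = 1"
    using assms(3,4) by (simp add: field_simps)
  then have "(-1 / (1 - 1/q))^\<alpha> * (1/q - 1)^\<alpha> = 1"
    by (simp only: power_mult_distrib[symmetric] power_one)
  ultimately show ?thesis
    using assms(3,5) by simp
qed

lemma Phi_term_Etilde_indicator:
  fixes w :: "nat \<Rightarrow> complex"
  assumes "qh^2 = q" "q2h^2 = 1/t" "q \<noteq> 0" "q \<noteq> 1" "t \<noteq> 0"
    and S: "S \<subseteq> {..<N}" "card S = \<alpha>"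
    and sep: "\<And>a b. a \<in> S \<Longrightarrow> b \<in> S \<Longrightarrow> a \<noteq> b \<Longrightarrow> w a \<noteq> w b \<and> q * w a \<noteq> w b \<and> w a / t \<noteq> w b"
  shows "Phi_term N q t qh q2h (Etilde q t \<alpha> g) (indicator S) w =
    g (map w (filter (\<lambda>r. r \<in> S) [0..<N])) * (\<Prod>a\<in>S. \<Prod>b\<in>{..<N} - S. (w a - w b * t) / (w a - w b))"
proof -
  define ls where "ls = filter (\<lambda>r. r \<in> S) [0..<N]"
  have fin: "finite S" using S(1) finite_subset by blast
  have "distinct ls" "set ls = S" using S(1) by (auto simp: ls_def)
  then have ls: "distinct ls" "set ls = S" "length ls = \<alpha>"
    using S(2) distinct_card[of ls] by auto
  define Y where "Y a b = (w a - w b * t) / (w a - w b)" for a b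
  define c where "c = -1 / (1 - 1/q)"
  have "Yfun N q t w a (w a) = c * (\<Prod>b\<in>S - {a}. Y a b) * (\<Prod>b\<in>{..<N} - S. Y a b)" if "a \<in> S" for a
  proof -
    have "{..<N} - {a} = (S - {a}) \<union> ({..<N} - S)" using that S(1) by auto
    then show ?thesis
      using fin by (simp add: Yfun_def Y_def c_def prod.union_disjoint Diff_Int_distrib2)
  qed
  then have Yfun: "(\<Prod>a\<in>S. Yfun N q t w a (w a)) =
      c^\<alpha> * (\<Prod>a\<in>S. \<Prod>b\<in>S - {a}. Y a b) * (\<Prod>a\<in>S. \<Prod>b\<in>{..<N} - S. Y a b)"
    using S(2) by (simp add: prod.distrib)
  have pair: "Y a b * ((w a - 1/q * w b) / (w a - w b)) * (1 / phi qh q2h (w a) (w b)) = 1 / (qh * q2h)"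
    if "a \<in> S" "b \<in> S" "a \<noteq> b" for a b
  proof -
    have "qh \<noteq> 0" "q2h \<noteq> 0" using assms(1-3,5) by auto
    then show ?thesis
      using pair_factor_cancel[of qh q2h "w a" "w b", unfolded assms(1,2)] sep[OF that]
      by (simp add: Y_def)
  qed
  have "(\<Prod>a\<in>S. \<Prod>b\<in>S - {a}. Y a b) *
      ((\<Prod>a\<in>S. \<Prod>b\<in>S - {a}. w a - 1/q * w b) / (\<Prod>a\<in>S. \<Prod>b\<in>S - {a}. w a - w b)) *
      (\<Prod>a\<in>S. \<Prod>b\<in>S - {a}. 1 / phi qh q2h (w a) (w b)) =
    (\<Prod>a\<in>S. \<Prod>b\<in>S - {a}. Y a b * ((w a - 1/q * w b) / (w a - w b)) * (1 / phi qh q2h (w a) (w b)))"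
    (is "?pairs = _")
    by (simp add: prod.distrib prod_dividef)
  also have "\<dots> = (\<Prod>a\<in>S. \<Prod>b\<in>S - {a}. 1 / (qh * q2h))"
    by (intro prod.cong refl pair) auto
  also have "\<dots> = (1 / (qh * q2h))^(\<alpha> * (\<alpha> - 1))"
    using fin S(2) by (simp add: card_Diff_singleton mult.commute flip: power_mult)
  finally have pairs: "?pairs = (1 / (qh * q2h))^(\<alpha> * (\<alpha> - 1))" .
  have "Phi_term N q t qh q2h (Etilde q t \<alpha> g) (indicator S) w =
      (c^\<alpha> * (1/q - 1)^\<alpha> * (t/q) powi ((int \<alpha> - int \<alpha>^2) div 2) * (1 / (qh * q2h))^(\<alpha> * (\<alpha> - 1))) *
      g (map w ls) * (\<Prod>a\<in>S. \<Prod>b\<in>{..<N} - S. Y a b)"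
    unfolding Phi_term_indicator[OF S(1)] Etilde_map_distinct[OF ls(1,3)] Yfun ls(2) ls_def[symmetric]
      pairs[symmetric]
    by (simp add: divide_inverse mult_ac)
  also have "\<dots> = g (map w ls) * (\<Prod>a\<in>S. \<Prod>b\<in>{..<N} - S. Y a b)"
    using Etilde_prefactor_cancel[OF assms(1-5)] by (simp add: c_def)
  finally show ?thesis by (simp add: ls_def Y_def)
qed

lemma generic_pt_neq:
  assumes "generic_pt N q t x" "i < N" "j < N" "i \<noteq> j"
  shows "x i \<noteq> x j" "x i \<noteq> q * x j" "x i \<noteq> t * x j"
proof -
  have "x i \<noteq> q powi a * t powi b * x j" for a b
    using assms unfolding generic_pt_def by blast
  from this[of 0 0] this[of 1 0] this[of 0 1] show "x i \<noteq> x j" "x i \<noteq> q * x j" "x i \<noteq> t * x j"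
    by simp_all
qed

lemma Yfun_factor_iota:
  fixes qh th a b :: complex
  assumes "qh \<noteq> 0" "th \<noteq> 0" "a \<noteq> 0" "b \<noteq> 0" "a \<noteq> b"
  shows "(1 / (qh * a) - 1 / (qh * b) * th^2) / (1 / (qh * a) - 1 / (qh * b)) =
         th * ((th * a - b / th) / (a - b))"
proof -
  have "1 / (qh * a) - 1 / (qh * b) * th^2 = (b - th^2 * a) / (qh * a * b)"
       "1 / (qh * a) - 1 / (qh * b) = (b - a) / (qh * a * b)"
       "th * a - b / th = (th^2 * a - b) / th"
    using assms(1-4) by (simp_all add: field_simps power2_eq_square)
  moreover have "a - b \<noteq> 0" "b - a \<noteq> 0" using assms(5) by auto
  ultimately show ?thesis using assms(1-4) by (simp add: field_simps)
qed

lemma iota_Phi_Etilde_indicator: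
  assumes "qh^2 = q" "th^2 = t" "q2h^2 = 1/t" "q \<noteq> 0" "q \<noteq> 1" "t \<noteq> 0"
    and "generic_pt N q t x" "S \<subseteq> {..<N}" "card S = \<alpha>"
  shows "iota qh (Phi N q t qh q2h \<alpha> (Etilde q t \<alpha> g)) (indicator S) x =
    th^(\<alpha> * (N - \<alpha>)) * g (map (\<lambda>i. 1 / (qh * x i)) (filter (\<lambda>r. r \<in> S) [0..<N])) *
    (\<Prod>a\<in>S. \<Prod>b\<in>{..<N} - S. (th * x a - x b / th) / (x a - x b))"
proof -
  define w where "w i = 1 / (qh * x i)" for i
  define G where "G a b = (th * x a - x b / th) / (x a - x b)" for a b
  have qh: "qh \<noteq> 0" and th: "th \<noteq> 0" using assms(1,2,4,6) by auto
  have x0: "x i \<noteq> 0" if "i < N" for i using assms(7) that by (simp add: generic_pt_def)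
  have sep: "w a \<noteq> w b \<and> q * w a \<noteq> w b \<and> w a / t \<noteq> w b" if "a \<in> S" "b \<in> S" "a \<noteq> b" for a b
  proof -
    have ab: "a < N" "b < N" using that assms(8) by auto
    then have "x a \<noteq> x b" "x a \<noteq> q * x b" "x b \<noteq> t * x a"
      using generic_pt_neq[OF assms(7)] \<open>a \<noteq> b\<close> by auto
    with ab show ?thesis
      using x0 qh assms(6) by (auto simp: w_def field_simps)
  qed
  have "(\<Sum>r<N. indicator S r) = \<alpha>"
    using sum_indicator_eq_card[of "{..<N}" S] assms(8,9) by (simp add: Int_absorb1)
  moreover have "\<forall>r. (r < N \<longrightarrow> 0 \<le> (indicator S r :: int)) \<and> (N \<le> r \<longrightarrow> indicator S r = (0 :: int))"
    using assms(8) by (auto simp: indicator_def)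
  ultimately have "iota qh (Phi N q t qh q2h \<alpha> (Etilde q t \<alpha> g)) (indicator S) x =
      Phi_term N q t qh q2h (Etilde q t \<alpha> g) (indicator S) w"
    by (simp add: iota_Phi_apply w_def[abs_def])
  also have "\<dots> = g (map w (filter (\<lambda>r. r \<in> S) [0..<N])) *
      (\<Prod>a\<in>S. \<Prod>b\<in>{..<N} - S. (w a - w b * t) / (w a - w b))"
    using Phi_term_Etilde_indicator[OF assms(1,3-6,8-9) sep] by simp
  also have "(\<Prod>a\<in>S. \<Prod>b\<in>{..<N} - S. (w a - w b * t) / (w a - w b)) =
      (\<Prod>a\<in>S. \<Prod>b\<in>{..<N} - S. th * G a b)"
  proof (intro prod.cong refl)
    fix a b assume "a \<in> S" "b \<in> {..<N} - S"
    then have ab: "a < N" "b < N" "a \<noteq> b" using assms(8) by auto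
    show "(w a - w b * t) / (w a - w b) = th * G a b"
      using Yfun_factor_iota[OF qh th x0 x0 generic_pt_neq(1)[OF assms(7)]] ab assms(2)
      by (simp add: w_def G_def)
  qed
  also have "\<dots> = th^(\<alpha> * (N - \<alpha>)) * (\<Prod>a\<in>S. \<Prod>b\<in>{..<N} - S. G a b)"
    using assms(8,9) finite_subset[OF assms(8)]
    by (simp add: prod.distrib card_Diff_subset mult.commute flip: power_mult)
  finally show ?thesis by (simp add: w_def G_def mult_ac)
qed

lemma iota_Phi_Etilde_eq_0:
  assumes "q \<noteq> 1" "qh \<noteq> 0" "\<And>i. i < N \<Longrightarrow> x i \<noteq> 0"
    and "\<nexists>S. S \<subseteq> {..<N} \<and> card S = \<alpha> \<and> e = indicator S"
  shows "iota qh (Phi N q t qh q2h \<alpha> (Etilde q t \<alpha> g)) e x = 0"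
proof (cases "(\<forall>r. (r < N \<longrightarrow> 0 \<le> e r) \<and> (N \<le> r \<longrightarrow> e r = 0)) \<and> (\<Sum>r<N. nat (e r)) = \<alpha>")
  case True
  then obtain r where "r < N" "2 \<le> e r"
    using nonneg_exponent_cases assms(4) by metis
  then have "Phi_term N q t qh q2h (Etilde q t \<alpha> g) (\<lambda>r. nat (e r)) (\<lambda>i. 1 / (qh * x i)) = 0"
    using True assms(1-3) by (intro Phi_term_Etilde_eq_0) auto
  then show ?thesis by (simp add: iota_Phi_apply)
next
  case False
  then show ?thesis unfolding iota_Phi_apply by (rule if_not_P)
qed

theorem proposition7p9:
  fixes q t qh th q2h :: complex and N \<alpha> :: nat and g :: "complex list \<Rightarrow> complex"
  assumes "q \<noteq> 0" and "t \<noteq> 0"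
    and "\<forall>n>0. q ^ n \<noteq> 1" and "\<forall>n>0. (1/t) ^ n \<noteq> 1" and "\<forall>n>0. (t/q) ^ n \<noteq> 1"
    and "qh^2 = q" and "th^2 = t" and "q2h^2 = 1/t"
    and "1 \<le> \<alpha>" and "\<alpha> \<le> N"
    and "sym_laurent \<alpha> g"
  shows "op_eq N q t
           (iota qh (Phi N q t qh q2h \<alpha> (Etilde q t \<alpha> g)))
           (\<lambda>e x. th ^ (\<alpha> * (N - \<alpha>)) *
              Mac_op N th \<alpha> (\<lambda>xs. g (map (\<lambda>y. 1 / (qh * y)) xs)) e x)"
  unfolding op_eq_def
proof (intro allI impI)
  fix e x assume gen: "generic_pt N q t x"
  have q1: "q \<noteq> 1" using assms(3) by (metis power_one_right zero_less_one)
  have qh: "qh \<noteq> 0" using assms(1,6) by auto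
  have x0: "\<And>i. i < N \<Longrightarrow> x i \<noteq> 0" using gen by (simp add: generic_pt_def)
  show "iota qh (Phi N q t qh q2h \<alpha> (Etilde q t \<alpha> g)) e x =
      th ^ (\<alpha> * (N - \<alpha>)) * Mac_op N th \<alpha> (\<lambda>xs. g (map (\<lambda>y. 1 / (qh * y)) xs)) e x"
  proof (cases "\<exists>S. S \<subseteq> {..<N} \<and> card S = \<alpha> \<and> e = indicator S")
    case True
    then obtain S where S: "S \<subseteq> {..<N}" "card S = \<alpha>" "e = indicator S" by blast
    let ?ls = "filter (\<lambda>r. r \<in> S) [0..<N]"
    have "distinct ?ls" "set ?ls = S" using S(1) by auto
    from Mac_op_indicator[OF assms(10) S(1,2) this
        symmetric_list_fun_map[OF sym_laurent_imp_symmetric_list_fun[OF assms(11)]]]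
    show ?thesis
      using iota_Phi_Etilde_indicator[OF assms(6-8,1) q1 assms(2) gen S(1,2)] S(3)
      by (simp add: comp_def)
  next
    case False
    then show ?thesis
      using iota_Phi_Etilde_eq_0[OF q1 qh x0] Mac_op_eq_0[OF assms(10)] by simp
  qed
qed

end
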